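(* Let $\epsilon>0$ and let $u,\hat u:\mathbf{S}\to\mathbb{R}^{|P|}$ be two utility functions on the same finite game structure. Suppose that for all $(p,s)\in\mathcal{I}$, $|u_p(s)-\hat u_p(s)|\le\max\{\epsilon,\ \mathrm{Reg}_p(s;\hat u)/2\}$. Then for all $(p,s)\in\mathcal{I}$ with $\mathrm{Reg}_p(s;u)=0$, it holds that $|u_p(s)-\hat u_p(s)|\le\epsilon$.
   Context: A finite normal-form game structure: finite player set $P$, finite pure strategy sets $S_p$, $\mathbf{S}=\prod_pS_p$, index set $\mathcal{I}=P\times\mathbf{S}$. For a utility function $u$, pure profile $s$ and player $p$, $A_{p,s}$ is the set of pure profiles obtained from $s$ by replacing $p$'s strategy by any $t\in S_p$, and $\mathrm{Reg}_p(s;u)=\sup_{s'\in A_{p,s}}u_p(s')-u_p(s)$. *)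

theory Defs
  imports "HOL-Library.FuncSet" Complex_Main
begin

definition game_structure :: "'p set \<Rightarrow> ('p \<Rightarrow> 's set) \<Rightarrow> bool" where
  "game_structure P S \<longleftrightarrow> finite P \<and> (\<forall>p\<in>P. finite (S p))"

definition profiles :: "'p set \<Rightarrow> ('p \<Rightarrow> 's set) \<Rightarrow> ('p \<Rightarrow> 's) set" where
  "profiles P S = PiE P S"

definition deviations :: "('p \<Rightarrow> 's set) \<Rightarrow> 'p \<Rightarrow> ('p \<Rightarrow> 's) \<Rightarrow> ('p \<Rightarrow> 's) set" where
  "deviations S p s = {s(p := t) | t. t \<in> S p}"

definition regret :: "('p \<Rightarrow> 's set) \<Rightarrow> ('p \<Rightarrow> ('p \<Rightarrow> 's) \<Rightarrow> real) \<Rightarrow> 'p \<Rightarrow> ('p \<Rightarrow> 's) \<Rightarrow> real" where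
  "regret S u p s = (SUP s' \<in> deviations S p s. u p s') - u p s"

end

theory Submission
  imports Defs
begin

text \<open>Let \<open>s'\<close> be a best deviation of \<open>p\<close> from \<open>s\<close> under \<open>uh\<close>. It has zero \<open>uh\<close>-regret,
so \<open>\<bar>u p s' - uh p s'\<bar> \<le> \<epsilon>\<close>, while the \<open>uh\<close>-regret at \<open>s\<close> is the gain
\<open>g = uh p s' - uh p s\<close>. Zero \<open>u\<close>-regret at \<open>s\<close> gives \<open>u p s' \<le> u p s\<close>. An error above \<open>\<epsilon>\<close>
at \<open>s\<close> is at most \<open>g / 2\<close>, so \<open>g > 2\<epsilon>\<close>; but an overestimate would be at least
\<open>g - \<epsilon> > g / 2\<close>, and an underestimate would force \<open>u p s < uh p s - \<epsilon> \<le> u p s'\<close>.\<close>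

lemma deviations_eq_image: "deviations S p s = (\<lambda>t. s(p := t)) ` S p"
  unfolding deviations_def by auto

lemma finite_deviations: "finite (S p) \<Longrightarrow> finite (deviations S p s)"
  by (simp add: deviations_eq_image)

lemma self_in_deviations: "s p \<in> S p \<Longrightarrow> s \<in> deviations S p s"
  unfolding deviations_def by (auto intro!: exI[of _ "s p"])

lemma deviations_of_deviation:
  "s' \<in> deviations S p s \<Longrightarrow> deviations S p s' = deviations S p s"
  unfolding deviations_def by auto

lemma deviations_subset_profiles:
  "p \<in> P \<Longrightarrow> s \<in> profiles P S \<Longrightarrow> deviations S p s \<subseteq> profiles P S"
  unfolding profiles_def deviations_def by (auto simp: PiE_iff extensional_def)

lemma le_SUP_deviations:
  assumes "finite (S p)" "x \<in> deviations S p s"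
  shows "f x \<le> (SUP s' \<in> deviations S p s. f s' :: real)"
  using assms by (intro cSUP_upper bdd_above_finite finite_imageI finite_deviations)

lemma le_of_regret_eq_0:
  assumes "finite (S p)" "regret S u p s = 0" "x \<in> deviations S p s"
  shows "u p x \<le> u p s"
  using le_SUP_deviations[OF assms(1,3), of "u p"] assms(2) unfolding regret_def by simp

lemma regret_best_deviation:
  assumes "finite (S p)" "s' \<in> deviations S p s"
    and "\<And>x. x \<in> deviations S p s \<Longrightarrow> u p x \<le> u p s'"
  shows "regret S u p s = u p s' - u p s"
proof -
  have "(SUP x \<in> deviations S p s. u p x) \<le> u p s'"
    using assms(2,3) by (intro cSUP_least) auto
  moreover have "u p s' \<le> (SUP x \<in> deviations S p s. u p x)"
    using le_SUP_deviations[OF assms(1,2)] .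
  ultimately have "(SUP x \<in> deviations S p s. u p x) = u p s'"
    by (rule antisym)
  then show ?thesis unfolding regret_def by simp
qed

lemma ex_best_deviation:
  fixes u :: "'p \<Rightarrow> ('p \<Rightarrow> 's) \<Rightarrow> 'a::linorder"
  assumes "finite (S p)" "s p \<in> S p"
  obtains s' where "s' \<in> deviations S p s" "\<And>x. x \<in> deviations S p s \<Longrightarrow> u p x \<le> u p s'"
proof -
  let ?D = "deviations S p s"
  have fin: "finite (u p ` ?D)"
    using assms(1) by (simp add: finite_deviations)
  have "u p ` ?D \<noteq> {}"
    using self_in_deviations[of s p S] assms(2) by blast
  then obtain s' where s': "s' \<in> ?D" and max: "u p s' = Max (u p ` ?D)"
    using Max_in[OF fin] by (metis imageE)
  show thesis
  proof (rule that[OF s'])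
    fix x assume "x \<in> ?D"
    then show "u p x \<le> u p s'"
      unfolding max using fin by simp
  qed
qed

lemma abs_error_le_via_best_response:
  fixes us us' uhs uhs' \<epsilon> :: real
  assumes "us' \<le> us" and "uhs \<le> uhs'"
    and "\<bar>us' - uhs'\<bar> \<le> \<epsilon>"
    and "\<bar>us - uhs\<bar> \<le> max \<epsilon> ((uhs' - uhs) / 2)"
  shows "\<bar>us - uhs\<bar> \<le> \<epsilon>"
  using assms by (auto simp: max_def abs_if split: if_splits)

theorem lemma4:
  fixes P :: "'p set" and S :: "'p \<Rightarrow> 's set"
    and u uh :: "'p \<Rightarrow> ('p \<Rightarrow> 's) \<Rightarrow> real" and \<epsilon> :: real
  assumes "game_structure P S"
    and "\<epsilon> > 0"
    and "\<forall>p\<in>P. \<forall>s\<in>profiles P S. \<bar>u p s - uh p s\<bar> \<le> max \<epsilon> (regret S uh p s / 2)"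
  shows "\<forall>p\<in>P. \<forall>s\<in>profiles P S. regret S u p s = 0 \<longrightarrow> \<bar>u p s - uh p s\<bar> \<le> \<epsilon>"
proof (intro ballI impI)
  fix p s
  assume p: "p \<in> P" and s: "s \<in> profiles P S" and regret_u: "regret S u p s = 0"
  have fin: "finite (S p)" using assms(1) p unfolding game_structure_def by simp
  have "s p \<in> S p" using s p unfolding profiles_def by auto
  then obtain s' where s': "s' \<in> deviations S p s"
    and best: "\<And>x. x \<in> deviations S p s \<Longrightarrow> uh p x \<le> uh p s'"
    using ex_best_deviation fin by metis
  have "regret S uh p s' = 0"
    using regret_best_deviation[of S p s' s' uh] fin best s'
    unfolding deviations_of_deviation[OF s'] by simp
  moreover have "s' \<in> profiles P S"
    using deviations_subset_profiles[OF p s] s' by blast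
  ultimately have "\<bar>u p s' - uh p s'\<bar> \<le> \<epsilon>"
    using assms(2,3) p by fastforce
  moreover have "\<bar>u p s - uh p s\<bar> \<le> max \<epsilon> (regret S uh p s / 2)"
    using assms(3) p s by blast
  moreover have "regret S uh p s = uh p s' - uh p s"
    using regret_best_deviation[of S p s' s uh, OF fin s' best] .
  ultimately show "\<bar>u p s - uh p s\<bar> \<le> \<epsilon>"
    using abs_error_le_via_best_response[of "u p s'" "u p s" "uh p s" "uh p s'" \<epsilon>]
      le_of_regret_eq_0[OF fin regret_u s'] best[OF self_in_deviations[of s p S, OF \<open>s p \<in> S p\<close>]] by simp
qed

end
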